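(* Let $\alpha\in(0,1)$, $\sigma=1-\frac{\alpha}{2}$, and let $c^{(\alpha,\sigma)}_{i,k}$ be the L2-1$_\sigma$ coefficients defined in the context. Then, for sufficiently small temporal stepsize $\tau$, $$(2\sigma-1)\,c^{(\alpha,\sigma)}_{k+1,k}>\sigma\, c^{(\alpha,\sigma)}_{k,k}\qquad\text{for all } k\ge 1 .$$
   Context: Let $\tilde a>0$, $T>\tilde a$, $N\in\mathbb{Z}^+$, $\tau=(T-\tilde a)/N$, $t_k=\tilde a+k\tau$ ($k=0,\dots,N$), and $t_{k+\sigma}=t_k+\sigma\tau$. For $1\le i\le k$ define $$a^{(\alpha,\sigma)}_{i,k}=\Big(\log\tfrac{t_{k+\sigma}}{t_{i-1}}\Big)^{1-\alpha}-\Big(\log\tfrac{t_{k+\sigma}}{t_{i}}\Big)^{1-\alpha},$$ $$b^{(\alpha,\sigma)}_{i,k}=\frac{1}{\log\frac{t_{i+1}}{t_{i-1}}}\Big\{\tfrac{2}{2-\alpha}\Big[\Big(\log\tfrac{t_{k+\sigma}}{t_{i-1}}\Big)^{2-\alpha}-\Big(\log\tfrac{t_{k+\sigma}}{t_{i}}\Big)^{2-\alpha}\Big]-\log\tfrac{t_i}{t_{i-1}}\Big[\Big(\log\tfrac{t_{k+\sigma}}{t_{i}}\Big)^{1-\alpha}+\Big(\log\tfrac{t_{k+\sigma}}{t_{i-1}}\Big)^{1-\alpha}\Big]\Big\}.$$ The coefficients are: $c^{(\alpha,\sigma)}_{1,0}=\frac{1}{\Gamma(2-\alpha)\log\frac{t_1}{t_0}}\big(\log\frac{t_\sigma}{t_0}\big)^{1-\alpha}$;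 for $k=1$: $c^{(\alpha,\sigma)}_{1,1}=\frac{a^{(\alpha,\sigma)}_{1,1}-b^{(\alpha,\sigma)}_{1,1}}{\Gamma(2-\alpha)\log\frac{t_1}{t_0}}$, $c^{(\alpha,\sigma)}_{2,1}=\frac{b^{(\alpha,\sigma)}_{1,1}+(\log\frac{t_{1+\sigma}}{t_1})^{1-\alpha}}{\Gamma(2-\alpha)\log\frac{t_2}{t_1}}$; for $k\ge2$: $c^{(\alpha,\sigma)}_{1,k}=\frac{a^{(\alpha,\sigma)}_{1,k}-b^{(\alpha,\sigma)}_{1,k}}{\Gamma(2-\alpha)\log\frac{t_1}{t_0}}$, $c^{(\alpha,\sigma)}_{i,k}=\frac{a^{(\alpha,\sigma)}_{i,k}+b^{(\alpha,\sigma)}_{i-1,k}-b^{(\alpha,\sigma)}_{i,k}}{\Gamma(2-\alpha)\log\frac{t_i}{t_{i-1}}}$ for $2\le i\le k$, and $c^{(\alpha,\sigma)}_{k+1,k}=\frac{b^{(\alpha,\sigma)}_{k,k}+(\log\frac{t_{k+\sigma}}{t_k})^{1-\alpha}}{\Gamma(2-\alpha)\log\frac{t_{k+1}}{t_k}}$. *)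

theory Defs
  imports "HOL-Analysis.Analysis"
begin

text \<open>Uniform grid: t_s = a + s*tau, for real index s (so that t_{k+sigma} makes sense).\<close>
definition tg :: "real \<Rightarrow> real \<Rightarrow> real \<Rightarrow> real" where
  "tg a tau s = a + s * tau"

definition acoef :: "real \<Rightarrow> real \<Rightarrow> real \<Rightarrow> real \<Rightarrow> nat \<Rightarrow> nat \<Rightarrow> real" where
  "acoef al sg a tau i k =
     (ln (tg a tau (real k + sg) / tg a tau (real i - 1))) powr (1 - al)
   - (ln (tg a tau (real k + sg) / tg a tau (real i))) powr (1 - al)"

definition bcoef :: "real \<Rightarrow> real \<Rightarrow> real \<Rightarrow> real \<Rightarrow> nat \<Rightarrow> nat \<Rightarrow> real" where
  "bcoef al sg a tau i k =
     (1 / ln (tg a tau (real i + 1) / tg a tau (real i - 1))) *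
     ( (2 / (2 - al)) *
         ((ln (tg a tau (real k + sg) / tg a tau (real i - 1))) powr (2 - al)
        - (ln (tg a tau (real k + sg) / tg a tau (real i))) powr (2 - al))
     - ln (tg a tau (real i) / tg a tau (real i - 1)) *
         ((ln (tg a tau (real k + sg) / tg a tau (real i))) powr (1 - al)
        + (ln (tg a tau (real k + sg) / tg a tau (real i - 1))) powr (1 - al)))"

definition ccoef :: "real \<Rightarrow> real \<Rightarrow> real \<Rightarrow> real \<Rightarrow> nat \<Rightarrow> nat \<Rightarrow> real" where
  "ccoef al sg a tau i k =
    (if k = 0 then
       (if i = 1 then (ln (tg a tau sg / tg a tau 0)) powr (1 - al)
                      / (Gamma (2 - al) * ln (tg a tau 1 / tg a tau 0))
        else 0)
     else if i = 1 then
       (acoef al sg a tau 1 k - bcoef al sg a tau 1 k)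
         / (Gamma (2 - al) * ln (tg a tau 1 / tg a tau 0))
     else if 2 \<le> i \<and> i \<le> k then
       (acoef al sg a tau i k + bcoef al sg a tau (i - 1) k - bcoef al sg a tau i k)
         / (Gamma (2 - al) * ln (tg a tau (real i) / tg a tau (real i - 1)))
     else if i = k + 1 then
       (bcoef al sg a tau k k + (ln (tg a tau (real k + sg) / tg a tau (real k))) powr (1 - al))
         / (Gamma (2 - al) * ln (tg a tau (real k + 1) / tg a tau (real k)))
     else 0)"

end

theory Submission
  imports Defs
begin

text \<open>
  Let H, Q, P be the logarithmic lengths ln (t_{k+1}/t_k), ln (t_k/t_{k-1}), ln (t_{k-1}/t_{k-2})
  of the last three steps and R = ln (t_{k+\<sigma>}/t_k). Each b_{i,k} is a weighted error of the
  trapezoidal rule for t^(1-\<alpha>), and \<Gamma>(2-\<alpha>) H c_{k+1,k} and \<Gamma>(2-\<alpha>) Q c_{k,k} are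
  functions of (H, P, Q, R) that are homogeneous of degree 1-\<alpha>. Hence the claim only depends
  on P/H, Q/H, R/H, which on a fine mesh of [a, T] with a > 0 are uniformly close to 1, 1, \<sigma>.
  At that limit point the inequality is strict: as 2\<sigma> - 1 = 1 - \<alpha>, it reduces to the strict
  concavity bound \<sigma> ((\<sigma>+1)^(1-\<alpha>) - \<sigma>^(1-\<alpha>)) < (1-\<alpha>) \<sigma>^(1-\<alpha>), together with two
  facts on the trapezoidal error of the concave t^(1-\<alpha>): it is nonnegative, and it decreases
  in the base point, because its derivative there is the error for the convex t^(-\<alpha>).
  Continuity extends the strict inequality to a neighbourhood of the limit point.
\<close>

lemma trapezoid_rule_overestimates:
  fixes F f f' :: "real \<Rightarrow> real"
  assumes h: "0 \<le> h"
    and F: "\<And>y. x \<le> y \<Longrightarrow> y \<le> x + h \<Longrightarrow> (F has_real_derivative f y) (at y)"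
    and f: "\<And>y. x \<le> y \<Longrightarrow> y \<le> x + h \<Longrightarrow> (f has_real_derivative f' y) (at y)"
    and mono: "mono_on {x..x + h} f'"
  shows "F (x + h) - F x \<le> h * (f x + f (x + h)) / 2"
proof -
  define psi where "psi y = F (y + x) - F x - y * (f x + f (y + x)) / 2" for y
  have "psi h \<le> psi 0"
  proof (rule DERIV_nonpos_imp_nonincreasing[OF h])
    fix y assume y: "0 \<le> y" "y \<le> h"
    have dF: "((\<lambda>v. F (v + x)) has_real_derivative f (y + x)) (at y)"
      using F[of "y + x"] y by (simp add: DERIV_shift)
    have df: "((\<lambda>v. f (v + x)) has_real_derivative f' (y + x)) (at y)"
      using f[of "y + x"] y by (simp add: DERIV_shift)
    have "(psi has_real_derivative (f (y + x) - f x - y * f' (y + x)) / 2) (at y)"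
      unfolding psi_def[abs_def]
      by (rule derivative_eq_intros dF df refl | simp add: field_simps)+
    moreover have "f (y + x) - f x \<le> y * f' (y + x)"
    proof (cases "y = 0")
      case False
      then have "x < x + y" using y by simp
      moreover have "(f has_real_derivative f' t) (at t)" if "x \<le> t" "t \<le> x + y" for t
        using f that y by simp
      ultimately obtain z where z: "x < z" "z < x + y" "f (x + y) - f x = y * f' z"
        using MVT2[of x "x + y" f f'] by auto
      have "f' z \<le> f' (x + y)"
        by (rule mono_onD[OF mono]) (use z y in auto)
      then have "y * f' z \<le> y * f' (x + y)" using y by (simp add: mult_left_mono)
      then show ?thesis using z by (simp add: add.commute)
    qed simp
    ultimately show "\<exists>d. (psi has_real_derivative d) (at y) \<and> d \<le> 0" by force
  qed
  then show ?thesis by (simp add: psi_def add.commute)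
qed

definition powr_trapezoid_error :: "real \<Rightarrow> real \<Rightarrow> real \<Rightarrow> real" where
  "powr_trapezoid_error b x h =
     ((x + h) powr (b + 1) - x powr (b + 1)) / (b + 1) - h * (x powr b + (x + h) powr b) / 2"

lemma powr_trapezoid_error_zero_width [simp]: "powr_trapezoid_error b x 0 = 0"
  by (simp add: powr_trapezoid_error_def)

lemma powr_trapezoid_error_scale:
  assumes "0 < c" "0 \<le> x" "0 \<le> x + h"
  shows "powr_trapezoid_error b (c * x) (c * h) = c powr (b + 1) * powr_trapezoid_error b x h"
proof -
  have "(c * x + c * h) powr p = c powr p * (x + h) powr p" for p
    using assms by (simp add: powr_mult flip: distrib_left)
  moreover have "(c * x) powr p = c powr p * x powr p" for p
    using assms by (simp add: powr_mult)
  moreover have "c powr (b + 1) = c * c powr b"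
    using assms by (simp add: powr_add)
  ultimately show ?thesis
    unfolding powr_trapezoid_error_def by (simp add: algebra_simps diff_divide_distrib)
qed

lemma powr_antiderivative:
  assumes "b \<noteq> -1" "0 < t"
  shows "((\<lambda>t. t powr (b + 1) / (b + 1)) has_real_derivative t powr b) (at t)"
proof -
  have "b + 1 \<noteq> 0" using assms by auto
  then show ?thesis using assms by (auto intro!: derivative_eq_intros)
qed

lemma powr_trapezoid_error_nonneg:
  assumes "0 \<le> b" "b \<le> 1" "0 < x" "0 \<le> h"
  shows "0 \<le> powr_trapezoid_error b x h"
proof -
  let ?F = "\<lambda>t. - (t powr (b + 1) / (b + 1))" and ?f = "\<lambda>t. - (t powr b)"
  have "?F (x + h) - ?F x \<le> h * (?f x + ?f (x + h)) / 2"
  proof (rule trapezoid_rule_overestimates[where f' = "\<lambda>t. - (b * t powr (b - 1))"])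
    show "(?F has_real_derivative ?f t) (at t)" if "x \<le> t" for t
      using that assms by (auto intro!: derivative_eq_intros powr_antiderivative)
    show "(?f has_real_derivative - (b * t powr (b - 1))) (at t)" if "x \<le> t" for t
      using that assms by (auto intro!: derivative_eq_intros)
    show "mono_on {x..x + h} (\<lambda>t. - (b * t powr (b - 1)))"
      using assms by (auto intro!: mono_onI mult_left_mono powr_mono2')
  qed fact
  moreover have "h * (- (x powr b) + - ((x + h) powr b)) / 2 = - (h * (x powr b + (x + h) powr b) / 2)"
    by (simp add: algebra_simps)
  ultimately show ?thesis unfolding powr_trapezoid_error_def diff_divide_distrib by linarith
qed

lemma powr_trapezoid_error_nonpos:
  assumes "-1 < b" "b \<le> 0" "0 < x" "0 \<le> h"
  shows "powr_trapezoid_error b x h \<le> 0"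
proof -
  let ?F = "\<lambda>t. t powr (b + 1) / (b + 1)" and ?f = "\<lambda>t. t powr b"
  have "?F (x + h) - ?F x \<le> h * (?f x + ?f (x + h)) / 2"
  proof (rule trapezoid_rule_overestimates[where f' = "\<lambda>t. b * t powr (b - 1)"])
    show "(?F has_real_derivative ?f t) (at t)" if "x \<le> t" for t
      using that assms by (intro powr_antiderivative) auto
    show "(?f has_real_derivative b * t powr (b - 1)) (at t)" if "x \<le> t" for t
      using that assms by (auto intro!: derivative_eq_intros)
    show "mono_on {x..x + h} (\<lambda>t. b * t powr (b - 1))"
      using assms by (auto intro!: mono_onI mult_left_mono_neg powr_mono2')
  qed fact
  then show ?thesis unfolding powr_trapezoid_error_def diff_divide_distrib by linarith
qed

lemma powr_trapezoid_error_has_derivative: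
  assumes "0 < b" "0 < x" "0 \<le> h"
  shows "((\<lambda>x. powr_trapezoid_error b x h) has_real_derivative
           b * powr_trapezoid_error (b - 1) x h) (at x)"
proof -
  have "((\<lambda>x. powr_trapezoid_error b x h) has_real_derivative
          (x + h) powr b - x powr b - h * (b * x powr (b - 1) + b * (x + h) powr (b - 1)) / 2) (at x)"
    unfolding powr_trapezoid_error_def using assms
    by (auto intro!: derivative_eq_intros simp flip: right_diff_distrib)
  moreover have "b * powr_trapezoid_error (b - 1) x h =
      (x + h) powr b - x powr b - h * (b * x powr (b - 1) + b * (x + h) powr (b - 1)) / 2"
    using assms by (simp add: powr_trapezoid_error_def field_simps)
  ultimately show ?thesis by simp
qed

lemma powr_trapezoid_error_antimono:
  assumes "0 < b" "b \<le> 1" "0 < x" "x \<le> y" "0 \<le> h"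
  shows "powr_trapezoid_error b y h \<le> powr_trapezoid_error b x h"
proof (rule DERIV_nonpos_imp_nonincreasing[OF \<open>x \<le> y\<close>])
  fix t assume "x \<le> t"
  then have "b * powr_trapezoid_error (b - 1) t h \<le> 0"
    using assms powr_trapezoid_error_nonpos[of "b - 1" t h] by (simp add: mult_nonneg_nonpos)
  then show "\<exists>d. ((\<lambda>x. powr_trapezoid_error b x h) has_real_derivative d) (at t) \<and> d \<le> 0"
    using powr_trapezoid_error_has_derivative[of b t h] assms \<open>x \<le> t\<close> by auto
qed

lemma powr_less_tangent_line:
  fixes b x h :: real
  assumes "0 < b" "b < 1" "0 < x" "0 < h"
  shows "(x + h) powr b < x powr b + b * x powr (b - 1) * h"
proof -
  have "((\<lambda>t. t powr b) has_real_derivative b * t powr (b - 1)) (at t)" if "x \<le> t" for t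
    using that assms by (auto intro!: derivative_eq_intros)
  then obtain z where z: "x < z" "(x + h) powr b - x powr b = h * (b * z powr (b - 1))"
    using MVT2[of x "x + h" "\<lambda>t. t powr b" "\<lambda>t. b * t powr (b - 1)"] assms by auto
  have "z powr (b - 1) < x powr (b - 1)"
    using z assms by (intro powr_less_mono2_neg) auto
  then show ?thesis using z assms by (simp add: algebra_simps)
qed

text \<open>With H, P, Q, R as above (and P = 0 for k = 1), \<Gamma>(2-\<alpha>) H c_{k+1,k} = c_last \<alpha> H Q R
  and \<Gamma>(2-\<alpha>) Q c_{k,k} = c_diag \<alpha> H P Q R.\<close>

definition c_last :: "real \<Rightarrow> real \<Rightarrow> real \<Rightarrow> real \<Rightarrow> real" where
  "c_last al H Q R = 2 / (H + Q) * powr_trapezoid_error (1 - al) R Q + R powr (1 - al)"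

definition c_diag :: "real \<Rightarrow> real \<Rightarrow> real \<Rightarrow> real \<Rightarrow> real \<Rightarrow> real" where
  "c_diag al H P Q R =
     (R + Q) powr (1 - al) - R powr (1 - al)
     + 2 / (Q + P) * powr_trapezoid_error (1 - al) (R + Q) P
     - 2 / (H + Q) * powr_trapezoid_error (1 - al) R Q"

definition coef_gap :: "real \<Rightarrow> real \<Rightarrow> real \<Rightarrow> real \<Rightarrow> real \<Rightarrow> real \<Rightarrow> real" where
  "coef_gap al sg H P Q R = (2 * sg - 1) * Q * c_last al H Q R - sg * H * c_diag al H P Q R"

lemma powr_two_minus:
  "0 \<le> (c::real) \<Longrightarrow> c powr (2 - al) = c * c powr (1 - al)"
  using powr_mult_base[of c "1 - al"] by simp

lemma two_div_sum_scale:
  fixes c :: real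
  assumes "0 < c"
  shows "2 / (c * X + c * Y) * (c powr (2 - al) * W) = c powr (1 - al) * (2 / (X + Y) * W)"
  using assms by (cases "X + Y = 0") (simp_all add: powr_two_minus flip: distrib_left)

lemma c_last_scale:
  assumes "0 < c" "0 \<le> Q" "0 \<le> R"
  shows "c_last al (c * H) (c * Q) (c * R) = c powr (1 - al) * c_last al H Q R"
proof -
  have "(c * R) powr (1 - al) = c powr (1 - al) * R powr (1 - al)"
    using assms by (simp add: powr_mult)
  moreover have "powr_trapezoid_error (1 - al) (c * R) (c * Q)
      = c powr (2 - al) * powr_trapezoid_error (1 - al) R Q"
    using assms powr_trapezoid_error_scale[of c R Q] by simp
  ultimately show ?thesis
    unfolding c_last_def by (simp only: two_div_sum_scale[OF assms(1)]) (simp add: algebra_simps)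
qed

lemma c_diag_scale:
  assumes "0 < c" "0 \<le> P" "0 \<le> Q" "0 \<le> R"
  shows "c_diag al (c * H) (c * P) (c * Q) (c * R) = c powr (1 - al) * c_diag al H P Q R"
proof -
  have "(c * R + c * Q) powr (1 - al) = c powr (1 - al) * (R + Q) powr (1 - al)"
       "(c * R) powr (1 - al) = c powr (1 - al) * R powr (1 - al)"
    using assms by (simp_all add: powr_mult flip: distrib_left)
  moreover have "powr_trapezoid_error (1 - al) (c * R + c * Q) (c * P)
      = c powr (2 - al) * powr_trapezoid_error (1 - al) (R + Q) P"
    using assms powr_trapezoid_error_scale[of c "R + Q" P] by (simp add: distrib_left)
  moreover have "powr_trapezoid_error (1 - al) (c * R) (c * Q)
      = c powr (2 - al) * powr_trapezoid_error (1 - al) R Q"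
    using assms powr_trapezoid_error_scale[of c R Q] by simp
  ultimately show ?thesis
    unfolding c_diag_def by (simp only: two_div_sum_scale[OF assms(1)]) (simp add: algebra_simps)
qed

lemma coef_gap_scale:
  assumes "0 < c" "0 \<le> P" "0 \<le> Q" "0 \<le> R"
  shows "coef_gap al sg (c * H) (c * P) (c * Q) (c * R) = c powr (2 - al) * coef_gap al sg H P Q R"
  unfolding coef_gap_def c_last_scale[OF assms(1,3,4)] c_diag_scale[OF assms]
  using assms by (simp add: powr_two_minus algebra_simps)

lemma c_diag_zero_le:
  assumes "0 \<le> al" "al \<le> 1" "0 < Q" "0 \<le> R" "0 \<le> P"
  shows "c_diag al H 0 Q R \<le> c_diag al H P Q R"
  using assms powr_trapezoid_error_nonneg[of "1 - al" "R + Q" P] by (simp add: c_diag_def)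

lemma coef_gap_pos_uniform:
  assumes "0 < al" "al < 1"
  shows "0 < coef_gap al (1 - al / 2) 1 1 1 (1 - al / 2)"
proof -
  define s where "s = 1 - al / 2"
  define E where "E x = powr_trapezoid_error (1 - al) x 1" for x
  have s: "0 < s" "2 * s - 1 = 1 - al" using assms by (auto simp: s_def)
  have "(s + 1) powr (1 - al) - s powr (1 - al) < (1 - al) * s powr (1 - al - 1)"
    using powr_less_tangent_line[of "1 - al" s 1] assms s by simp
  then have "s * ((s + 1) powr (1 - al) - s powr (1 - al)) < s * ((1 - al) * s powr (1 - al - 1))"
    using s by (intro mult_strict_left_mono) auto
  also have "\<dots> = (1 - al) * s powr (1 - al)"
    using powr_mult_base[of s "1 - al - 1"] s by simp
  finally have concave_step: "s * ((s + 1) powr (1 - al) - s powr (1 - al)) < (1 - al) * s powr (1 - al)" .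
  have "0 \<le> (1 - al) * E s" "0 \<le> s * (E s - E (s + 1))"
    unfolding E_def using assms s
    by (auto intro!: mult_nonneg_nonneg powr_trapezoid_error_nonneg powr_trapezoid_error_antimono)
  moreover have "coef_gap al s 1 1 1 s
      = (1 - al) * E s + ((1 - al) * s powr (1 - al) - s * ((s + 1) powr (1 - al) - s powr (1 - al)))
        + s * (E s - E (s + 1))"
    unfolding coef_gap_def c_last_def c_diag_def E_def s(2) by (simp add: algebra_simps)
  ultimately have "0 < coef_gap al s 1 1 1 s"
    using concave_step by linarith
  then show ?thesis by (simp add: s_def)
qed

lemma continuous_at_pos_box:
  fixes f :: "real \<times> real \<times> real \<Rightarrow> real"
  assumes "isCont f (x, y, z)" "0 < f (x, y, z)"
  obtains d where "0 < d"
    "\<And>x' y' z'. \<bar>x' - x\<bar> < d \<Longrightarrow> \<bar>y' - y\<bar> < d \<Longrightarrow> \<bar>z' - z\<bar> < d \<Longrightarrow> 0 < f (x', y', z')"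
proof -
  obtain e where e: "0 < e" "\<And>w. dist w (x, y, z) < e \<Longrightarrow> dist (f w) (f (x, y, z)) < f (x, y, z)"
    using assms unfolding continuous_at_eps_delta by blast
  show ?thesis
  proof (rule that[of "e / 3"])
    fix x' y' z' assume close: "\<bar>x' - x\<bar> < e / 3" "\<bar>y' - y\<bar> < e / 3" "\<bar>z' - z\<bar> < e / 3"
    have "dist (x', y', z') (x, y, z) \<le> \<bar>x' - x\<bar> + \<bar>y' - y\<bar> + \<bar>z' - z\<bar>"
      using norm_Pair_le[of "x' - x" "(y' - y, z' - z)"] norm_Pair_le[of "y' - y" "z' - z"]
      by (simp add: dist_norm)
    then have "dist (f (x', y', z')) (f (x, y, z)) < f (x, y, z)"
      using close by (intro e(2)) linarith
    then show "0 < f (x', y', z')" by (simp add: dist_real_def)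
  qed (use e in simp)
qed

lemma coef_gap_pos_near_uniform:
  assumes "0 < al" "al < 1"
  obtains d where "0 < d"
    "\<And>p q r. \<bar>p - 1\<bar> < d \<Longrightarrow> \<bar>q - 1\<bar> < d \<Longrightarrow> \<bar>r - (1 - al / 2)\<bar> < d \<Longrightarrow>
       0 < coef_gap al (1 - al / 2) 1 p q r"
proof -
  let ?f = "\<lambda>(p, q, r). coef_gap al (1 - al / 2) 1 p q r"
  have "isCont ?f (1, 1, 1 - al / 2)"
    unfolding coef_gap_def c_last_def c_diag_def powr_trapezoid_error_def case_prod_beta
    using assms by (intro continuous_intros) (auto simp: netlimit_at)
  moreover have "0 < ?f (1, 1, 1 - al / 2)"
    using coef_gap_pos_uniform[OF assms] by simp
  ultimately show ?thesis
    using continuous_at_pos_box that by (metis (no_types, lifting) case_prod_conv)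
qed

definition log_step :: "real \<Rightarrow> real \<Rightarrow> real \<Rightarrow> real \<Rightarrow> real" where
  "log_step a tau u v = ln (tg a tau v / tg a tau u)"

lemma tg_pos: "0 < a \<Longrightarrow> 0 < tau \<Longrightarrow> 0 \<le> s \<Longrightarrow> 0 < tg a tau s"
  by (simp add: tg_def add_pos_nonneg)

lemma log_step_trans:
  assumes "0 < a" "0 < tau" "0 \<le> u" "0 \<le> v" "0 \<le> w"
  shows "log_step a tau u v + log_step a tau v w = log_step a tau u w"
proof -
  have "0 < tg a tau u" "0 < tg a tau v" "0 < tg a tau w"
    using assms by (simp_all add: tg_pos)
  then show ?thesis by (simp add: log_step_def ln_div)
qed

lemma log_step_bounds:
  assumes "0 < a" "0 < tau" "0 \<le> u" "u \<le> v"
  shows "(v - u) * tau / tg a tau v \<le> log_step a tau u v"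
    and "log_step a tau u v \<le> (v - u) * tau / tg a tau u"
proof -
  define x d where "x = tg a tau u" and "d = (v - u) * tau"
  have x: "0 < x" and d: "0 \<le> d" using assms by (auto simp: x_def d_def tg_pos)
  have v: "tg a tau v = x + d"
    by (simp add: x_def d_def tg_def algebra_simps)
  have log_step: "log_step a tau u v = ln (1 + d / x)"
    using x by (simp add: log_step_def v x_def[symmetric] field_simps)
  have "d / (x + d) = (d / x) / (1 + d / x)"
    using x d by (simp add: field_simps)
  also have "\<dots> \<le> ln (1 + d / x)"
    using ln_add1_ge[of "d / x"] x d by (simp add: add.commute)
  finally show "(v - u) * tau / tg a tau v \<le> log_step a tau u v"
    unfolding d_def[symmetric] v log_step .
  show "log_step a tau u v \<le> (v - u) * tau / tg a tau u"
    unfolding d_def[symmetric] x_def[symmetric] log_step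
    using ln_add_one_self_le_self[of "d / x"] x d by simp
qed

lemma ratio_close_to_one:
  fixes A B m M :: real
  assumes "0 < m" "m \<le> M" "1 / M \<le> A" "A \<le> 1 / m" "1 / M \<le> B" "B \<le> 1 / m"
  shows "\<bar>A / B - 1\<bar> \<le> (M - m) / m"
proof -
  have M: "0 < M" "0 < 1 / M" using assms by auto
  have "A / B \<le> (1 / m) / (1 / M)"
    using assms M by (intro frac_le) linarith+
  then have "A / B - 1 \<le> (M - m) / m"
    using assms by (simp add: diff_divide_distrib)
  moreover have "(1 / M) / (1 / m) \<le> A / B"
    using assms M by (intro frac_le) linarith+
  then have "1 - A / B \<le> (M - m) / M"
    using M by (simp add: diff_divide_distrib)
  moreover have "(M - m) / M \<le> (M - m) / m"
    using assms by (intro divide_left_mono) auto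
  ultimately show ?thesis by linarith
qed

lemma log_step_ratio_close:
  assumes "0 < a" "0 < tau" "0 \<le> m"
    and "m \<le> u1" "u1 < v1" "v1 \<le> m + w" "m \<le> u2" "u2 < v2" "v2 \<le> m + w"
  shows "\<bar>(log_step a tau u1 v1 / (v1 - u1)) / (log_step a tau u2 v2 / (v2 - u2)) - 1\<bar> \<le> w * tau / a"
proof -
  define A where "A u v = log_step a tau u v / ((v - u) * tau)" for u v
  have tg_mono: "tg a tau s \<le> tg a tau s'" if "s \<le> s'" for s s'
    using that assms by (simp add: tg_def)
  have pos: "0 < tg a tau s" if "m \<le> s" for s
    using that assms by (simp add: tg_pos)
  have bounds: "1 / tg a tau (m + w) \<le> A u v" "A u v \<le> 1 / tg a tau m"
    if "m \<le> u" "u < v" "v \<le> m + w" for u v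
  proof -
    have uv: "0 < (v - u) * tau" using that assms by simp
    have "1 / tg a tau (m + w) \<le> 1 / tg a tau v"
      using that pos tg_mono by (intro divide_left_mono) auto
    also have "\<dots> \<le> A u v"
      using log_step_bounds(1)[of a tau u v] that assms uv
      by (simp add: A_def pos_le_divide_eq mult.commute)
    finally show "1 / tg a tau (m + w) \<le> A u v" .
    have "A u v \<le> 1 / tg a tau u"
      using log_step_bounds(2)[of a tau u v] that assms uv
      by (simp add: A_def pos_divide_le_eq mult.commute)
    also have "\<dots> \<le> 1 / tg a tau m"
      using that pos tg_mono by (intro divide_left_mono) auto
    finally show "A u v \<le> 1 / tg a tau m" .
  qed
  have "\<bar>A u1 v1 / A u2 v2 - 1\<bar> \<le> (tg a tau (m + w) - tg a tau m) / tg a tau m"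
    using assms pos tg_mono bounds[of u1 v1] bounds[of u2 v2]
    by (intro ratio_close_to_one) auto
  also have "\<dots> = w * tau / tg a tau m"
    by (simp add: tg_def algebra_simps)
  also have "\<dots> \<le> w * tau / a"
    using assms pos[of m] by (intro divide_left_mono) (auto simp: tg_def)
  finally show ?thesis
    using assms by (simp add: A_def)
qed

lemma acoef_eq_log_step:
  fixes i k :: nat
  assumes "0 < a" "0 < tau" "1 \<le> i" "0 \<le> sg"
  defines "L \<equiv> log_step a tau (real i - 1) (real i)"
    and "B \<equiv> log_step a tau (real i) (real k + sg)"
  shows "acoef al sg a tau i k = (B + L) powr (1 - al) - B powr (1 - al)"
proof -
  have "log_step a tau (real i - 1) (real k + sg) = B + L"
    using log_step_trans[of a tau "real i - 1" "real i" "real k + sg"] assms by simp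
  then show ?thesis by (simp add: acoef_def B_def log_step_def)
qed

lemma bcoef_eq_trapezoid_error:
  fixes i k :: nat
  assumes "0 < a" "0 < tau" "1 \<le> i" "0 \<le> sg"
  defines "L \<equiv> log_step a tau (real i - 1) (real i)"
    and "L' \<equiv> log_step a tau (real i) (real i + 1)"
    and "B \<equiv> log_step a tau (real i) (real k + sg)"
  shows "bcoef al sg a tau i k = 2 / (L' + L) * powr_trapezoid_error (1 - al) B L"
proof -
  have A: "ln (tg a tau (real k + sg) / tg a tau (real i - 1)) = B + L"
    using log_step_trans[of a tau "real i - 1" "real i" "real k + sg"] assms
    by (simp add: log_step_def)
  have D: "ln (tg a tau (real i + 1) / tg a tau (real i - 1)) = L' + L"
    using log_step_trans[of a tau "real i - 1" "real i" "real i + 1"] assms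
    by (simp add: log_step_def)
  have B: "ln (tg a tau (real k + sg) / tg a tau (real i)) = B"
    and L: "ln (tg a tau (real i) / tg a tau (real i - 1)) = L"
    by (simp_all add: B_def L_def log_step_def)
  have weights: "1 / d * (2 / c * x - l * y) = 2 / d * (x / c - l * y / 2)" for d c x l y :: real
    by (simp add: right_diff_distrib)
  show ?thesis
    unfolding bcoef_def powr_trapezoid_error_def A D B L weights by (simp add: add.commute)
qed

lemma ccoef_last_eq_c_last:
  fixes k :: nat
  assumes "0 < a" "0 < tau" "1 \<le> k" "0 \<le> sg"
  defines "H \<equiv> log_step a tau (real k) (real k + 1)"
    and "Q \<equiv> log_step a tau (real k - 1) (real k)"
    and "R \<equiv> log_step a tau (real k) (real k + sg)"
  shows "ccoef al sg a tau (k + 1) k = c_last al H Q R / (Gamma (2 - al) * H)"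
  using assms bcoef_eq_trapezoid_error[of a tau k sg al k]
  by (simp add: ccoef_def c_last_def log_step_def)

lemma ccoef_diag_eq_c_diag:
  fixes k :: nat
  assumes "0 < a" "0 < tau" "1 \<le> k" "0 \<le> sg"
  defines "H \<equiv> log_step a tau (real k) (real k + 1)"
    and "Q \<equiv> log_step a tau (real k - 1) (real k)"
    and "R \<equiv> log_step a tau (real k) (real k + sg)"
    and "P \<equiv> if k = 1 then 0 else log_step a tau (real k - 2) (real k - 1)"
  shows "ccoef al sg a tau k k = c_diag al H P Q R / (Gamma (2 - al) * Q)"
proof -
  have a: "acoef al sg a tau k k = (R + Q) powr (1 - al) - R powr (1 - al)"
    and b: "bcoef al sg a tau k k = 2 / (H + Q) * powr_trapezoid_error (1 - al) R Q"
    using assms acoef_eq_log_step[of a tau k sg al k] bcoef_eq_trapezoid_error[of a tau k sg al k]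
    by (simp_all add: add.commute)
  show ?thesis
  proof (cases "k = 1")
    case True
    then show ?thesis
      using a b by (simp add: ccoef_def c_diag_def Q_def P_def log_step_def)
  next
    case False
    then have k: "2 \<le> k" using assms by simp
    have "log_step a tau (real k - 1) (real k + sg) = R + Q"
      using log_step_trans[of a tau "real k - 1" "real k" "real k + sg"] assms k
      by (simp add: add.commute)
    then have "bcoef al sg a tau (k - 1) k = 2 / (Q + P) * powr_trapezoid_error (1 - al) (R + Q) P"
      using assms k bcoef_eq_trapezoid_error[of a tau "k - 1" sg al k]
      by (simp add: of_nat_diff algebra_simps)
    then show ?thesis
      using a b k by (simp add: ccoef_def c_diag_def Q_def log_step_def)
  qed
qed

lemma log_step_pos:
  assumes "0 < a" "0 < tau" "0 \<le> u" "u < v"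
  shows "0 < log_step a tau u v"
proof -
  have "0 < (v - u) * tau / tg a tau v"
    using assms by (simp add: tg_pos)
  then show ?thesis using log_step_bounds(1)[of a tau u v] assms by linarith
qed

lemma log_step_ratios_close:
  fixes k :: nat
  assumes "0 < a" "0 < tau" "1 \<le> k" "0 < sg" "sg \<le> 1"
  defines "H \<equiv> log_step a tau (real k) (real k + 1)"
    and "Q \<equiv> log_step a tau (real k - 1) (real k)"
    and "R \<equiv> log_step a tau (real k) (real k + sg)"
    and "P \<equiv> if k = 1 then log_step a tau (real k) (real k + 1)
               else log_step a tau (real k - 2) (real k - 1)"
  shows "\<bar>P / H - 1\<bar> \<le> 3 * tau / a" "\<bar>Q / H - 1\<bar> \<le> 3 * tau / a"
    and "\<bar>R / H - sg\<bar> \<le> 3 * tau / a"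
proof -
  have H: "0 < H" using assms by (simp add: H_def log_step_pos)
  show "\<bar>Q / H - 1\<bar> \<le> 3 * tau / a"
    using log_step_ratio_close[of a tau "real k - 1" "real k - 1" "real k" 3 "real k" "real k + 1"] assms
    by (simp add: H_def Q_def)
  have "\<bar>R / sg / H - 1\<bar> \<le> 3 * tau / a"
    using log_step_ratio_close[of a tau "real k - 1" "real k" "real k + sg" 3 "real k" "real k + 1"] assms
    by (simp add: H_def R_def)
  moreover have "R / H - sg = sg * (R / sg / H - 1)"
    using \<open>0 < sg\<close> by (simp add: field_simps)
  then have "\<bar>R / H - sg\<bar> = sg * \<bar>R / sg / H - 1\<bar>"
    using \<open>0 < sg\<close> by (simp add: abs_mult)
  moreover have "sg * \<bar>R / sg / H - 1\<bar> \<le> \<bar>R / sg / H - 1\<bar>"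
    using \<open>0 < sg\<close> \<open>sg \<le> 1\<close> by (simp add: mult_left_le_one_le)
  ultimately show "\<bar>R / H - sg\<bar> \<le> 3 * tau / a" by linarith
  show "\<bar>P / H - 1\<bar> \<le> 3 * tau / a"
  proof (cases "k = 1")
    case False
    then show ?thesis
      using log_step_ratio_close[of a tau "real k - 2" "real k - 2" "real k - 1" 3 "real k" "real k + 1"] assms
      by (simp add: H_def P_def)
  qed (use H assms in \<open>simp add: P_def H_def\<close>)
qed

lemma ccoef_ineq_if_coef_gap_pos:
  fixes k :: nat
  assumes "0 < al" "al < 1" "0 < a" "0 < tau" "1 \<le> k" "0 \<le> sg"
  defines "H \<equiv> log_step a tau (real k) (real k + 1)"
    and "Q \<equiv> log_step a tau (real k - 1) (real k)"
    and "R \<equiv> log_step a tau (real k) (real k + sg)"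
    and "P \<equiv> if k = 1 then 0 else log_step a tau (real k - 2) (real k - 1)"
  assumes diag_le: "c_diag al H P Q R \<le> c_diag al H P' Q R"
    and gap: "0 < coef_gap al sg H P' Q R"
  shows "sg * ccoef al sg a tau k k < (2 * sg - 1) * ccoef al sg a tau (k + 1) k"
proof -
  have pos: "0 < H" "0 < Q" "0 < Gamma (2 - al)"
    using assms by (auto simp: H_def Q_def Gamma_real_pos intro!: log_step_pos)
  have "ccoef al sg a tau (k + 1) k = c_last al H Q R / (Gamma (2 - al) * H)"
    "ccoef al sg a tau k k = c_diag al H P Q R / (Gamma (2 - al) * Q)"
    using ccoef_last_eq_c_last[of a tau k sg al] ccoef_diag_eq_c_diag[of a tau k sg al] assms
    by (simp_all add: H_def Q_def R_def P_def)
  then have ccoef: "c_last al H Q R = Gamma (2 - al) * H * ccoef al sg a tau (k + 1) k"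
    "c_diag al H P Q R = Gamma (2 - al) * Q * ccoef al sg a tau k k"
    using pos by (simp_all add: field_simps)
  have "sg * H * c_diag al H P Q R \<le> sg * H * c_diag al H P' Q R"
    using diag_le pos assms by (intro mult_left_mono) auto
  then have "sg * H * c_diag al H P Q R < (2 * sg - 1) * Q * c_last al H Q R"
    using gap unfolding coef_gap_def by linarith
  then have "(Gamma (2 - al) * H * Q) * (sg * ccoef al sg a tau k k)
      < (Gamma (2 - al) * H * Q) * ((2 * sg - 1) * ccoef al sg a tau (k + 1) k)"
    unfolding ccoef by (simp add: algebra_simps)
  then show ?thesis
    using pos by (simp add: mult_less_cancel_left_pos)
qed

lemma ccoef_last_dominates_diag:
  fixes k :: nat
  assumes "0 < al" "al < 1" "0 < a" "0 < tau" "1 \<le> k"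
    and gap: "\<And>p q r. \<bar>p - 1\<bar> \<le> 3 * tau / a \<Longrightarrow> \<bar>q - 1\<bar> \<le> 3 * tau / a \<Longrightarrow>
       \<bar>r - (1 - al / 2)\<bar> \<le> 3 * tau / a \<Longrightarrow> 0 < coef_gap al (1 - al / 2) 1 p q r"
  shows "(2 * (1 - al / 2) - 1) * ccoef al (1 - al / 2) a tau (k + 1) k
           > (1 - al / 2) * ccoef al (1 - al / 2) a tau k k"
proof -
  define s where "s = 1 - al / 2"
  define H Q R where "H = log_step a tau (real k) (real k + 1)"
    and "Q = log_step a tau (real k - 1) (real k)"
    and "R = log_step a tau (real k) (real k + s)"
  \<comment> \<open>For k = 1 the term b_{0,1} is missing (P = 0); a nonnegative stand-in only enlarges
    c_{1,1}, and P = H keeps the ratio P / H at 1.\<close>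
  define P where "P = (if k = 1 then H else log_step a tau (real k - 2) (real k - 1))"
  have s: "0 < s" "s \<le> 1" using assms by (auto simp: s_def)
  have pos: "0 < H" "0 < Q" "0 < R" "0 \<le> P"
    using assms s
    by (auto simp: H_def Q_def R_def P_def intro!: log_step_pos less_imp_le[OF log_step_pos])
  have "0 < coef_gap al s 1 (P / H) (Q / H) (R / H)"
    using gap log_step_ratios_close[of a tau k s] assms s
    unfolding s_def H_def Q_def R_def P_def by auto
  then have "0 < coef_gap al s H P Q R"
    using coef_gap_scale[of H "P / H" "Q / H" "R / H" al s 1] pos by simp
  moreover have "c_diag al H (if k = 1 then 0 else log_step a tau (real k - 2) (real k - 1)) Q R
      \<le> c_diag al H P Q R"
    using c_diag_zero_le[of al Q R H H] assms pos by (simp add: P_def)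
  ultimately have "s * ccoef al s a tau k k < (2 * s - 1) * ccoef al s a tau (k + 1) k"
    using ccoef_ineq_if_coef_gap_pos[of al a tau k s P] assms s
    by (simp add: H_def Q_def R_def)
  then show ?thesis by (simp add: s_def)
qed

theorem lemma2p2:
  fixes al a T :: real
  assumes "0 < al" and "al < 1" and "0 < a" and "a < T"
  shows "\<exists>tau0 > 0. \<forall>N::nat. 0 < N \<longrightarrow> (T - a) / real N \<le> tau0 \<longrightarrow>
           (\<forall>k::nat. 1 \<le> k \<and> k + 1 \<le> N \<longrightarrow>
              (2 * (1 - al / 2) - 1) * ccoef al (1 - al / 2) a ((T - a) / real N) (k + 1) k
                > (1 - al / 2) * ccoef al (1 - al / 2) a ((T - a) / real N) k k)"
proof -
  obtain d where "0 < d" and gap: "\<And>p q r. \<bar>p - 1\<bar> < d \<Longrightarrow> \<bar>q - 1\<bar> < d \<Longrightarrow>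
      \<bar>r - (1 - al / 2)\<bar> < d \<Longrightarrow> 0 < coef_gap al (1 - al / 2) 1 p q r"
    using coef_gap_pos_near_uniform assms by blast
  show ?thesis
  proof (intro exI[of _ "a * d / 6"] conjI allI impI)
    show "0 < a * d / 6" using \<open>0 < d\<close> assms by simp
    fix N k :: nat
    assume "0 < N" "(T - a) / real N \<le> a * d / 6" "1 \<le> k \<and> k + 1 \<le> N"
    moreover from this have "3 * ((T - a) / real N) / a < d"
      using \<open>0 < d\<close> assms by (simp add: field_simps)
    ultimately show "(2 * (1 - al / 2) - 1) * ccoef al (1 - al / 2) a ((T - a) / real N) (k + 1) k
        > (1 - al / 2) * ccoef al (1 - al / 2) a ((T - a) / real N) k k"
      using assms gap by (intro ccoef_last_dominates_diag) auto
  qed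
qed

end
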